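(* Let $M=(E,\mathcal{I})$ be a matroid and let $x\in\mathbb{R}^E$ with $x>0$ lie in the base polytope $B(M)$. Then there is a loss matrix $L$ (namely the diagonal matrix with $L_{e,e}=1/x_e$ for $e\in E$) such that $(x,x)$ is a symmetric Nash equilibrium of the matroid game with loss matrix $L$.
   Context: $B(M)=\{x\ge0: x(S)\le r(S)\ \forall S\subseteq E,\ x(E)=r(E)\}$ with $r$ the rank function. In the matroid game with loss matrix $L$, the row player chooses $x\in B(M)$ minimizing $x^TLy$ and the column player chooses $y\in B(M)$ maximizing it; $(x,x)$ is a symmetric Nash equilibrium if $x^TLz\le x^TLx\le z^TLx$ for all $z\in B(M)$. *)

theory Defs
  imports Complex_Main
begin

definition matroid :: "'a set \<Rightarrow> 'a set set \<Rightarrow> bool" where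
  "matroid E indep \<longleftrightarrow>
     finite E \<and> indep \<subseteq> Pow E \<and> {} \<in> indep \<and>
     (\<forall>A B. A \<in> indep \<and> B \<subseteq> A \<longrightarrow> B \<in> indep) \<and>
     (\<forall>A B. A \<in> indep \<and> B \<in> indep \<and> card A < card B \<longrightarrow>
        (\<exists>e \<in> B - A. insert e A \<in> indep))"

definition mrank :: "'a set set \<Rightarrow> 'a set \<Rightarrow> nat" where
  "mrank indep S = Max {card I | I. I \<in> indep \<and> I \<subseteq> S}"

text \<open>Base polytope B(M); vectors in R^E are functions 'a => real, only values on E matter.\<close>
definition base_polytope :: "'a set \<Rightarrow> 'a set set \<Rightarrow> ('a \<Rightarrow> real) set" where
  "base_polytope E indep = {x. (\<forall>e\<in>E. x e \<ge> 0) \<and>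
      (\<forall>S. S \<subseteq> E \<longrightarrow> sum x S \<le> real (mrank indep S)) \<and>
      sum x E = real (mrank indep E)}"

definition bilin :: "'a set \<Rightarrow> ('a \<Rightarrow> 'a \<Rightarrow> real) \<Rightarrow> ('a \<Rightarrow> real) \<Rightarrow> ('a \<Rightarrow> real) \<Rightarrow> real" where
  "bilin E L x y = (\<Sum>e\<in>E. \<Sum>f\<in>E. x e * L e f * y f)"

definition symmetric_NE :: "'a set \<Rightarrow> 'a set set \<Rightarrow> ('a \<Rightarrow> 'a \<Rightarrow> real) \<Rightarrow> ('a \<Rightarrow> real) \<Rightarrow> bool" where
  "symmetric_NE E indep L x \<longleftrightarrow> x \<in> base_polytope E indep \<and>
     (\<forall>z \<in> base_polytope E indep.
        bilin E L x z \<le> bilin E L x x \<and> bilin E L x x \<le> bilin E L z x)"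

end

theory Submission
  imports Defs
begin

text \<open>With loss matrix \<open>diag(1/x)\<close> the loss \<open>x\<^sup>T L z = z\<^sup>T L x\<close> equals the total mass \<open>z(E)\<close>,
  which is the constant \<open>r(E)\<close> on the base polytope. Both players are therefore indifferent
  between all strategies, and \<open>(x, x)\<close> is trivially an equilibrium.\<close>

lemma bilin_diagonal:
  "bilin E (\<lambda>e f. if e = f then d e else 0) u v = (\<Sum>e\<in>E. u e * d e * v e)"
proof (cases "finite E")
  case True
  have "(\<Sum>f\<in>E. u e * (if e = f then d e else 0) * v f) = u e * d e * v e" if "e \<in> E" for e
    using True that by (simp add: if_distrib if_distribR sum.delta cong: if_cong)
  then show ?thesis unfolding bilin_def by (rule sum.cong[OF refl])
qed (simp add: bilin_def)

lemma bilin_inverse_diagonal: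
  assumes "\<forall>e\<in>E. x e \<noteq> 0"
  shows "bilin E (\<lambda>e f. if e = f then 1 / x e else 0) x v = sum v E"
    and "bilin E (\<lambda>e f. if e = f then 1 / x e else 0) v x = sum v E"
  using assms by (simp_all add: bilin_diagonal cong: sum.cong)

lemma base_polytope_sum:
  "z \<in> base_polytope E indep \<Longrightarrow> sum z E = real (mrank indep E)"
  by (simp add: base_polytope_def)

theorem corollary11:
  fixes E :: "'a set" and indep :: "'a set set" and x :: "'a \<Rightarrow> real"
  assumes "matroid E indep"
    and "x \<in> base_polytope E indep"
    and "\<forall>e\<in>E. x e > 0"
  shows "\<exists>L :: 'a \<Rightarrow> 'a \<Rightarrow> real.
           (\<forall>e\<in>E. \<forall>f\<in>E. L e f = (if e = f then 1 / x e else 0)) \<and>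
           symmetric_NE E indep L x"
proof (intro exI conjI)
  let ?L = "\<lambda>e f. if e = f then 1 / x e else 0"
  show "\<forall>e\<in>E. \<forall>f\<in>E. ?L e f = (if e = f then 1 / x e else 0)" by simp
  have "\<forall>e\<in>E. x e \<noteq> 0" using assms(3) by auto
  then show "symmetric_NE E indep ?L x"
    unfolding symmetric_NE_def
    using assms(2) by (simp add: bilin_inverse_diagonal base_polytope_sum)
qed

end
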